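(* Let $p$ be an external position with $m=|B(p)|\ge 2$, and let $j_1\le\dots\le j_{n-m}$ be the values $\bar p_i$, $i\notin B(p)$, in non-decreasing order. Then: (a) the independent rotation group satisfies $G_{rot}(p)=\mathrm{Alt}(B(p))$ if $m=n$ and $G_{rot}(p)=\mathrm{Sym}(B(p))$ if $m<n$; (b) the dependent rotation group satisfies $\overline{G}_{rot}(p)=\mathrm{Alt}(B(p))$ if $m=n$ or $j_1<j_2<\dots<j_{n-m}<(k-1)/2$, and $\overline{G}_{rot}(p)=\mathrm{Sym}(B(p))$ if $m<n$ and either $j_{n-m}=(k-1)/2$ or there is $r$ with $j_r=j_{r+1}<(k-1)/2$.
   Context: Fix integers $k\ge 2$, $n\ge 3$, $M=\{0,\dots,k-1\}$. Positions are $p\in M^n$ (cubie $\prod_i[p_i,p_i+1]\subset[0,k]^n$); $B(p)=\{i:p_i\in\{0,k-1\}\}$, $p$ external if $B(p)\ne\emptyset$; for $x\in\{1,\dots,k-2\}$, $\bar x=\min(x,k-1-x)$. For distinct $i,j$, $\psi_{i,j}:M^n\to M^n$ is $(\psi_{i,j}p)_i=k-1-p_j$, $(\psi_{i,j}p)_j=p_i$, other coordinates unchanged; note $B(\psi_{i,j}p)=\tau_{ij}(B(p))$ with $\tau_{ij}$ the transposition of $i,j$. A move is given by distinct $i,j$ and constants $c_l\in M$ ($l\notin\{i,j\}$) and applies $\psi_{i,j}$ to all positions $p$ with $p_l=c_l$ ($l\notin\{i,j\}$), fixing the others; a combination is a finite sequence of moves. Orientation faces: the cubie at an external $p$ has $|B(p)|$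 orientation faces indexed by $l\in B(p)$, face $l$ being the intersection of the cubie with the hyperplanes $x_s=0$ (if $p_s=0$) or $x_s=k$ (if $p_s=k-1$) for $s\in B(p)\setminus\{l\}$. Let $X=\{(p,l): p\text{ external}, l\in B(p)\}$; a move with parameters $i,j$ acts on $X$ by $(p,l)\mapsto(\psi_{i,j}(p),\tau_{ij}(l))$ for $p$ in its layer and fixes $(p,l)$ otherwise; a combination acts on $X$ by composition (this tracks where each orientation face of each cubie goes). The dependent rotation group $\overline{G}_{rot}(p)$ is the set of permutations of $B(p)$ induced on $\{p\}\times B(p)$ by combinations $g$ with $g(p)=p$. The independent rotation group $G_{rot}(p)$ is the group of permutations of the orientation faces of the cubie at $p$ (identified with permutations of $B(p)$) induced by orientation-preserving isometries of $\mathbb{R}^n$ that map the cubie onto itself and map its set of orientation faces onto itself. *)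

theory Defs
  imports "HOL-Analysis.Analysis" "HOL-Combinatorics.Combinatorics" "HOL-Library.Multiset"
begin

(* Coordinates are indexed by a finite type 'n, with n = CARD('n).
   A position is a function p :: 'n => nat with all values < k (i.e. p in M^n). *)

definition Bset :: "nat \<Rightarrow> ('n \<Rightarrow> nat) \<Rightarrow> 'n set" where
  "Bset k p = {i. p i = 0 \<or> p i = k - 1}"

definition bar :: "nat \<Rightarrow> nat \<Rightarrow> nat" where
  "bar k x = min x (k - 1 - x)"

definition psi :: "nat \<Rightarrow> 'n \<Rightarrow> 'n \<Rightarrow> ('n \<Rightarrow> nat) \<Rightarrow> ('n \<Rightarrow> nat)" where
  "psi k i j q = q(i := k - 1 - q j, j := q i)"

(* a move: (i, j, c); c l is the constant for l \<notin> {i,j} (values of c at i, j are irrelevant) *)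
type_synonym 'n move = "'n \<times> 'n \<times> ('n \<Rightarrow> nat)"

definition valid_move :: "nat \<Rightarrow> 'n move \<Rightarrow> bool" where
  "valid_move k mv = (case mv of (i, j, c) \<Rightarrow> i \<noteq> j \<and> (\<forall>l. l \<notin> {i, j} \<longrightarrow> c l < k))"

definition in_layer :: "'n move \<Rightarrow> ('n \<Rightarrow> nat) \<Rightarrow> bool" where
  "in_layer mv q = (case mv of (i, j, c) \<Rightarrow> (\<forall>l. l \<notin> {i, j} \<longrightarrow> q l = c l))"

definition move_pos :: "nat \<Rightarrow> 'n move \<Rightarrow> ('n \<Rightarrow> nat) \<Rightarrow> ('n \<Rightarrow> nat)" where
  "move_pos k mv q = (case mv of (i, j, c) \<Rightarrow> if in_layer mv q then psi k i j q else q)"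

(* action of a move on X (pairs of a position and an orientation-face index) *)
definition move_X :: "nat \<Rightarrow> 'n move \<Rightarrow> ('n \<Rightarrow> nat) \<times> 'n \<Rightarrow> ('n \<Rightarrow> nat) \<times> 'n" where
  "move_X k mv x = (case mv of (i, j, c) \<Rightarrow> case x of (q, l) \<Rightarrow>
     if in_layer mv q then (psi k i j q, Transposition.transpose i j l) else (q, l))"

(* combination = list of moves, first move applied first *)
fun comb_pos :: "nat \<Rightarrow> 'n move list \<Rightarrow> ('n \<Rightarrow> nat) \<Rightarrow> ('n \<Rightarrow> nat)" where
  "comb_pos k [] q = q"
| "comb_pos k (mv # ms) q = comb_pos k ms (move_pos k mv q)"

fun comb_X :: "nat \<Rightarrow> 'n move list \<Rightarrow> ('n \<Rightarrow> nat) \<times> 'n \<Rightarrow> ('n \<Rightarrow> nat) \<times> 'n" where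
  "comb_X k [] x = x"
| "comb_X k (mv # ms) x = comb_X k ms (move_X k mv x)"

definition Sym :: "'n set \<Rightarrow> ('n \<Rightarrow> 'n) set" where
  "Sym B = {\<sigma>. \<sigma> permutes B}"

definition Alt :: "'n set \<Rightarrow> ('n \<Rightarrow> 'n) set" where
  "Alt B = {\<sigma>. \<sigma> permutes B \<and> evenperm \<sigma>}"

definition Gbar_rot :: "nat \<Rightarrow> ('n \<Rightarrow> nat) \<Rightarrow> ('n \<Rightarrow> 'n) set" where
  "Gbar_rot k p = {\<sigma>. \<sigma> permutes Bset k p \<and>
     (\<exists>ms. (\<forall>mv\<in>set ms. valid_move k mv) \<and> comb_pos k ms p = p \<and>
           (\<forall>l\<in>Bset k p. comb_X k ms (p, l) = (p, \<sigma> l)))}"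

definition cubie :: "('n::finite \<Rightarrow> nat) \<Rightarrow> (real^'n) set" where
  "cubie p = {x. \<forall>i. real (p i) \<le> x $ i \<and> x $ i \<le> real (p i) + 1}"

definition orient_face :: "nat \<Rightarrow> ('n::finite \<Rightarrow> nat) \<Rightarrow> 'n \<Rightarrow> (real^'n) set" where
  "orient_face k p l = {x \<in> cubie p. \<forall>s \<in> Bset k p - {l}.
       x $ s = (if p s = 0 then 0 else real k)}"

definition orient_faces :: "nat \<Rightarrow> ('n::finite \<Rightarrow> nat) \<Rightarrow> (real^'n) set set" where
  "orient_faces k p = orient_face k p ` Bset k p"

definition orient_pres_isometry :: "(real^'n::finite \<Rightarrow> real^'n) \<Rightarrow> bool" where
  "orient_pres_isometry f \<longleftrightarrow> (\<forall>x y. dist (f x) (f y) = dist x y) \<and>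
      det (matrix (\<lambda>x. f x - f 0)) = 1"

definition G_rot :: "nat \<Rightarrow> ('n::finite \<Rightarrow> nat) \<Rightarrow> ('n \<Rightarrow> 'n) set" where
  "G_rot k p = {\<sigma>. \<sigma> permutes Bset k p \<and>
     (\<exists>f. orient_pres_isometry f \<and> f ` cubie p = cubie p \<and>
          (\<lambda>F. f ` F) ` orient_faces k p = orient_faces k p \<and>
          (\<forall>l\<in>Bset k p. f ` orient_face k p l = orient_face k p (\<sigma> l)))}"

(* the values \<bar>p_i, i \<notin> B(p), sorted non-decreasingly (0-based list) *)
definition jlist :: "nat \<Rightarrow> ('n::finite \<Rightarrow> nat) \<Rightarrow> nat list" where
  "jlist k p = sorted_list_of_multiset (image_mset (\<lambda>i. bar k (p i)) (mset_set (- Bset k p)))"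

end

theory Submission
  imports Defs
begin

(*
  Every combination acts on the coordinates as a signed permutation: a quarter turn \<psi>_ij
  transposes the labels i, j and reflects one coordinate, so the permutation it induces on the
  orientation faces is even exactly when an even number of coordinates gets reflected. When the
  interior depths are pairwise distinct and none of them is the middle layer, a combination
  fixing p can neither move nor reflect an interior coordinate; the reflected coordinates are then
  the boundary ones carried between the 0-side and the (k-1)-side, which come in pairs. Conversely,
  two quarter turns through three boundary coordinates give a 3-cycle up to an even number of
  reflections, which a half turn repairs; a boundary transposition is realised together with a half
  turn through a middle coordinate, or together with the transposition of two interior coordinates
  of equal depth.

  A symmetry of a cubie preserving its orientation faces is a signed permutation of coordinates
  about the centre of the cubie, whose determinant is sign \<sigma> times the product of the signs. If
  some coordinate is interior its sign is free, so every \<sigma> occurs; if all are boundary, the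
  corner shared by all orientation faces is fixed, the signs multiply to 1 and \<sigma> must be even.
*)

section \<open>Generating the alternating and the symmetric group\<close>

lemma double_transposition_in_closure:
  assumes comp: "\<And>\<sigma> \<tau>. \<sigma> \<in> G \<Longrightarrow> \<tau> \<in> G \<Longrightarrow> \<tau> \<circ> \<sigma> \<in> G" and "id \<in> G"
    and cyc: "\<And>x y z. x \<in> B \<Longrightarrow> y \<in> B \<Longrightarrow> z \<in> B \<Longrightarrow> distinct [x, y, z] \<Longrightarrow>
        Transposition.transpose x y \<circ> Transposition.transpose x z \<in> G"
    and B: "a \<in> B" "b \<in> B" "c \<in> B" "d \<in> B" and ab: "a \<noteq> b" and cd: "c \<noteq> d"
  shows "Transposition.transpose a b \<circ> Transposition.transpose c d \<in> G"
proof -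
  let ?t = Transposition.transpose
  consider "{a, b} = {c, d}" | "{a, b} \<inter> {c, d} = {}"
    | "a = c \<or> a = d \<or> b = c \<or> b = d" "{a, b} \<noteq> {c, d}"
    by blast
  then show ?thesis
  proof cases
    case 1
    then show ?thesis using \<open>id \<in> G\<close> \<open>a \<noteq> b\<close> by (auto simp: doubleton_eq_iff transpose_commute)
  next
    case 2
    have "?t a b \<circ> ?t a c \<in> G" "?t c a \<circ> ?t c d \<in> G" using 2 ab cd cyc[OF B(1,2,3)] cyc[OF B(3,1,4)] by auto
    moreover have "(?t a b \<circ> ?t a c) \<circ> (?t c a \<circ> ?t c d) = ?t a b \<circ> ?t c d"
      by (rule ext) (simp add: transpose_commute)
    ultimately show ?thesis using comp by metis
  next
    case 3
    then consider "a = c" "b \<noteq> d" | "a = d" "b \<noteq> c" | "b = c" "a \<noteq> d" | "b = d" "a \<noteq> c"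
      by blast
    then show ?thesis
      by cases (use ab cd cyc[OF B(1,2,4)] cyc[OF B(1,2,3)] cyc[OF B(2,1,4)] cyc[OF B(2,1,3)]
          in \<open>auto simp: transpose_commute\<close>)
  qed
qed

lemma Alt_subset_if_three_cycles:
  assumes "finite B"
    and comp: "\<And>\<sigma> \<tau>. \<sigma> \<in> G \<Longrightarrow> \<tau> \<in> G \<Longrightarrow> \<tau> \<circ> \<sigma> \<in> G" and "id \<in> G"
    and cyc: "\<And>x y z. x \<in> B \<Longrightarrow> y \<in> B \<Longrightarrow> z \<in> B \<Longrightarrow> distinct [x, y, z] \<Longrightarrow>
        Transposition.transpose x y \<circ> Transposition.transpose x z \<in> G"
  shows "Alt B \<subseteq> G"
proof
  let ?t = Transposition.transpose
  fix \<sigma> assume "\<sigma> \<in> Alt B"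
  then have "\<sigma> permutes B" "evenperm \<sigma>" by (auto simp: Alt_def)
  have "(evenperm \<sigma> \<longrightarrow> \<sigma> \<in> G) \<and>
        (\<not> evenperm \<sigma> \<longrightarrow> (\<forall>a\<in>B. \<forall>b\<in>B. a \<noteq> b \<longrightarrow> ?t a b \<circ> \<sigma> \<in> G))"
    using \<open>\<sigma> permutes B\<close> \<open>finite B\<close>
  proof (induction rule: permutes_induct)
    case id
    then show ?case using \<open>id \<in> G\<close> by (simp add: id_def)
  next
    case (swap a b \<sigma>)
    have flip: "evenperm (?t a b \<circ> \<sigma>) \<longleftrightarrow> \<not> evenperm \<sigma>"
      using evenperm_comp[OF permutation_swap_id permutes_imp_permutation[OF \<open>finite B\<close> swap.hyps(4)]]
        swap.hyps(3) by (simp add: evenperm_swap)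
    show ?case
    proof (cases "evenperm \<sigma>")
      case True
      have "?t c d \<circ> (?t a b \<circ> \<sigma>) \<in> G" if "c \<in> B" "d \<in> B" "c \<noteq> d" for c d
      proof -
        have "?t c d \<circ> ?t a b \<in> G"
          using that swap.hyps by (intro double_transposition_in_closure[OF comp \<open>id \<in> G\<close> cyc])
        from comp[OF _ this] have "(?t c d \<circ> ?t a b) \<circ> \<sigma> \<in> G" using swap.IH True by blast
        then show ?thesis by (simp only: comp_assoc)
      qed
      with flip True show ?thesis by blast
    next
      case False
      then show ?thesis using flip swap by blast
    qed
  qed
  then show "\<sigma> \<in> G" using \<open>evenperm \<sigma>\<close> by blast
qed

lemma Sym_subset_if_Alt_subset:
  assumes "finite B" "Alt B \<subseteq> G" and comp: "\<And>\<sigma> \<tau>. \<sigma> \<in> G \<Longrightarrow> \<tau> \<in> G \<Longrightarrow> \<tau> \<circ> \<sigma> \<in> G"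
    and "a \<in> B" "b \<in> B" "a \<noteq> b" "Transposition.transpose a b \<in> G"
  shows "Sym B \<subseteq> G"
proof
  let ?t = "Transposition.transpose a b"
  fix \<sigma> assume "\<sigma> \<in> Sym B"
  then have \<sigma>: "\<sigma> permutes B" by (simp add: Sym_def)
  show "\<sigma> \<in> G"
  proof (cases "evenperm \<sigma>")
    case True
    then show ?thesis using \<sigma> assms(2) by (auto simp: Alt_def)
  next
    case False
    have "?t \<circ> \<sigma> permutes B" using \<sigma> assms(4,5) by (simp add: permutes_compose permutes_swap_id)
    moreover have "evenperm (?t \<circ> \<sigma>)"
      using evenperm_comp[OF permutation_swap_id permutes_imp_permutation[OF assms(1) \<sigma>]] False assms(6)
      by (simp add: evenperm_swap)
    ultimately have "?t \<circ> \<sigma> \<in> G" using assms(2) by (auto simp: Alt_def)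
    from comp[OF this assms(7)] show ?thesis by (simp flip: comp_assoc)
  qed
qed

lemma even_card_sym_diff:
  assumes "finite A" "finite B"
  shows "even (card ((A - B) \<union> (B - A))) \<longleftrightarrow> (even (card A) \<longleftrightarrow> even (card B))"
proof -
  have "card ((A - B) \<union> (B - A)) = card (A - B) + card (B - A)"
    using assms by (intro card_Un_disjoint) auto
  moreover have "card A = card (A \<inter> B) + card (A - B)" by (rule card_Int_Diff[OF assms(1)])
  moreover have "card B = card (A \<inter> B) + card (B - A)"
    using card_Int_Diff[OF assms(2), of A] by (simp add: Int_commute)
  ultimately show ?thesis by presburger
qed

lemma permutes_even_card_crossings:
  fixes P :: "'a \<Rightarrow> bool"
  assumes "\<sigma> permutes B" "finite B"
  shows "even (card {u\<in>B. P (\<sigma> u) \<noteq> P u})"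
proof -
  define A where "A = {u\<in>B. P u}"
  define A' where "A' = {u\<in>B. P (\<sigma> u)}"
  have "A' = \<sigma> -` A" using permutes_in_image[OF assms(1)] by (auto simp: A_def A'_def)
  then have "card A' = card A"
    using permutes_inj[OF assms(1)] permutes_surj[OF assms(1)] by (simp add: card_vimage_inj)
  moreover have "finite A" "finite A'" using assms(2) by (simp_all add: A_def A'_def)
  ultimately have "even (card ((A - A') \<union> (A' - A)))" by (simp add: even_card_sym_diff)
  moreover have "{u\<in>B. P (\<sigma> u) \<noteq> P u} = (A - A') \<union> (A' - A)" by (auto simp: A_def A'_def)
  ultimately show ?thesis by simp
qed

lemma comb_pos_append: "comb_pos k (ms1 @ ms2) q = comb_pos k ms2 (comb_pos k ms1 q)"
  by (induction ms1 arbitrary: q) auto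

lemma comb_X_append: "comb_X k (ms1 @ ms2) x = comb_X k ms2 (comb_X k ms1 x)"
  by (induction ms1 arbitrary: x) auto

lemma psi_less: "\<forall>i. q i < k \<Longrightarrow> psi k a b q i < k"
  by (auto simp: psi_def)

definition comb_reaches :: "nat \<Rightarrow> ('n \<Rightarrow> nat) \<Rightarrow> ('n \<Rightarrow> 'n) \<Rightarrow> ('n \<Rightarrow> nat) \<Rightarrow> bool" where
  "comb_reaches k q \<sigma> q' \<longleftrightarrow> (\<exists>ms. (\<forall>mv\<in>set ms. valid_move k mv) \<and> comb_pos k ms q = q' \<and>
     (\<forall>l. comb_X k ms (q, l) = (q', \<sigma> l)))"

lemma comb_reaches_trans:
  assumes "comb_reaches k q \<sigma> q'" "comb_reaches k q' \<tau> q''"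
  shows "comb_reaches k q (\<tau> \<circ> \<sigma>) q''"
proof -
  obtain ms1 ms2 where
    "\<forall>mv\<in>set ms1. valid_move k mv" "comb_pos k ms1 q = q'" "\<forall>l. comb_X k ms1 (q, l) = (q', \<sigma> l)"
    "\<forall>mv\<in>set ms2. valid_move k mv" "comb_pos k ms2 q' = q''" "\<forall>l. comb_X k ms2 (q', l) = (q'', \<tau> l)"
    using assms unfolding comb_reaches_def by blast
  then show ?thesis
    unfolding comb_reaches_def
    by (intro exI[of _ "ms1 @ ms2"]) (auto simp: comb_pos_append comb_X_append)
qed

(* Taking q itself as the constants of the move selects the layer through q. *)
lemma comb_reaches_turn:
  assumes "i \<noteq> j" "\<forall>l. q l < k"
  shows "comb_reaches k q (Transposition.transpose i j) (psi k i j q)"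
  unfolding comb_reaches_def using assms
  by (intro exI[of _ "[(i, j, q)]"])
     (auto simp: valid_move_def in_layer_def move_pos_def move_X_def)

lemma comb_reaches_two_turns:
  assumes "a \<noteq> b" "c \<noteq> d" "\<forall>l. q l < k"
  shows "comb_reaches k q (Transposition.transpose c d \<circ> Transposition.transpose a b)
           (psi k c d (psi k a b q))"
  using assms by (intro comb_reaches_trans[OF comb_reaches_turn comb_reaches_turn])
    (auto simp: psi_less)

(* The half turn \<psi>_ij \<circ> \<psi>_ij reflects the coordinates i and j and relabels nothing. *)
lemma comb_reaches_unreflect:
  assumes "comb_reaches k q \<sigma> (q(i := k - 1 - q i, j := k - 1 - q j))" "i \<noteq> j" "\<forall>l. q l < k"
  shows "comb_reaches k q \<sigma> q"
proof -
  let ?r = "q(i := k - 1 - q i, j := k - 1 - q j)"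
  have "k - 1 - (k - 1 - q l) = q l" for l
    using assms(3)[rule_format, of l] by arith
  then have twice: "psi k i j (psi k i j ?r) = q"
    using assms(2) by (auto simp: psi_def fun_eq_iff)
  have "comb_reaches k ?r (Transposition.transpose i j \<circ> Transposition.transpose i j)
          (psi k i j (psi k i j ?r))"
    using assms by (intro comb_reaches_two_turns) auto
  then have "comb_reaches k ?r id q" using twice by simp
  from comb_reaches_trans[OF assms(1) this] show ?thesis by simp
qed

(* Two quarter turns cycle a, b, c and reflect an even number of them; a half turn undoes the
   reflections. *)
lemma comb_reaches_three_cycle:
  assumes d: "a \<noteq> b" "b \<noteq> c" "a \<noteq> c" and k: "k \<ge> 2" and q: "\<forall>l. q l < k"
    and B: "a \<in> Bset k q" "b \<in> Bset k q" "c \<in> Bset k q"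
  shows "comb_reaches k q (Transposition.transpose a b \<circ> Transposition.transpose a c) q"
proof -
  let ?r = "psi k a b (psi k a c q)"
  have R: "comb_reaches k q (Transposition.transpose a b \<circ> Transposition.transpose a c) ?r"
    using d q by (intro comb_reaches_two_turns) auto
  have r: "?r = q(a := k - 1 - q b, b := k - 1 - q c, c := q a)"
    using d by (auto simp: psi_def fun_eq_iff)
  have v: "q a = 0 \<or> q a = k - 1" "q b = 0 \<or> q b = k - 1" "q c = 0 \<or> q c = k - 1"
    using B by (auto simp: Bset_def)
  consider "q a = q b" "q a = q c" | "q a \<noteq> q b" "q a = q c" | "q a = q b" "q a \<noteq> q c"
    | "q a \<noteq> q b" "q a \<noteq> q c" by blast
  then show ?thesis
  proof cases
    case 1
    then have "?r = q(a := k - 1 - q a, b := k - 1 - q b)"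
      unfolding r using d k v by (auto simp: fun_eq_iff)
    then show ?thesis using R comb_reaches_unreflect d q by simp
  next
    case 2
    then have "?r = q" unfolding r using d k v by (auto simp: fun_eq_iff)
    then show ?thesis using R by simp
  next
    case 3
    then have "?r = q(a := k - 1 - q a, c := k - 1 - q c)"
      unfolding r using d k v by (auto simp: fun_eq_iff)
    then show ?thesis using R comb_reaches_unreflect d q by simp
  next
    case 4
    then have "?r = q(b := k - 1 - q b, c := k - 1 - q c)"
      unfolding r using d k v by (auto simp: fun_eq_iff)
    then show ?thesis using R comb_reaches_unreflect d q by simp
  qed
qed

(* The quarter turn reflects one of a, b; reflecting the middle coordinate z changes nothing,
   so a half turn through z undoes that reflection. *)
lemma comb_reaches_swap_with_middle:
  assumes d: "a \<noteq> b" "z \<noteq> a" "z \<noteq> b" and k: "k \<ge> 2" and q: "\<forall>l. q l < k"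
    and B: "a \<in> Bset k q" "b \<in> Bset k q" and z: "2 * q z + 1 = k"
  shows "comb_reaches k q (Transposition.transpose a b) q"
proof -
  let ?r = "psi k a b q"
  have R: "comb_reaches k q (Transposition.transpose a b) ?r"
    using d q by (intro comb_reaches_turn)
  have r: "?r = q(a := k - 1 - q b, b := q a)"
    using d by (auto simp: psi_def fun_eq_iff)
  have v: "q a = 0 \<or> q a = k - 1" "q b = 0 \<or> q b = k - 1"
    using B by (auto simp: Bset_def)
  define x where "x = (if q a = q b then a else b)"
  have "x \<noteq> z" using d by (auto simp: x_def)
  moreover have "?r = q(x := k - 1 - q x, z := k - 1 - q z)"
    unfolding r x_def using d k v z by (auto simp: fun_eq_iff)
  ultimately show ?thesis using R comb_reaches_unreflect q by simp
qed

lemma bar_eq_iff: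
  assumes "x < k" "y < k"
  shows "bar k x = bar k y \<longleftrightarrow> x = y \<or> x = k - 1 - y"
  using assms by (auto simp: bar_def min_def)

(* Each quarter turn reflects exactly one of its two coordinates (for c and d because they have
   the same depth and are not middle), and a single half turn undoes both reflections. *)
lemma comb_reaches_two_swaps:
  assumes d: "a \<noteq> b" "c \<noteq> d" "{c, d} \<inter> {a, b} = {}" and k: "k \<ge> 2" and q: "\<forall>l. q l < k"
    and B: "a \<in> Bset k q" "b \<in> Bset k q"
    and cd: "bar k (q c) = bar k (q d)" and c: "2 * q c + 1 \<noteq> k"
  shows "comb_reaches k q (Transposition.transpose c d \<circ> Transposition.transpose a b) q"
proof -
  let ?r = "psi k c d (psi k a b q)"
  have R: "comb_reaches k q (Transposition.transpose c d \<circ> Transposition.transpose a b) ?r"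
    using d q by (intro comb_reaches_two_turns) auto
  have r: "?r = q(a := k - 1 - q b, b := q a, c := k - 1 - q d, d := q c)"
    using d by (auto simp: psi_def fun_eq_iff)
  have v: "q a = 0 \<or> q a = k - 1" "q b = 0 \<or> q b = k - 1"
    using B by (auto simp: Bset_def)
  have cd': "q c = q d \<or> q c = k - 1 - q d" using cd q bar_eq_iff by blast
  define x where "x = (if q a = q b then a else b)"
  define y where "y = (if q c = q d then c else d)"
  have "x \<noteq> y" using d by (auto simp: x_def y_def)
  moreover have "?r = q(x := k - 1 - q x, y := k - 1 - q y)"
    unfolding r x_def y_def using d k v cd' c q[rule_format, of c] q[rule_format, of d]
    by (auto simp: fun_eq_iff)
  ultimately show ?thesis using R comb_reaches_unreflect q by simp
qed

section \<open>The dependent rotation group\<close>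

lemma Gbar_rot_if_comb_reaches:
  assumes "comb_reaches k p \<tau> p" "\<sigma> permutes Bset k p" "\<forall>l\<in>Bset k p. \<tau> l = \<sigma> l"
  shows "\<sigma> \<in> Gbar_rot k p"
  using assms unfolding comb_reaches_def Gbar_rot_def by auto

lemma id_in_Gbar_rot: "id \<in> Gbar_rot k p"
  unfolding Gbar_rot_def by (auto intro: exI[of _ "[]"] permutes_id)

lemma Gbar_rot_comp:
  assumes "\<sigma> \<in> Gbar_rot k p" "\<tau> \<in> Gbar_rot k p"
  shows "\<tau> \<circ> \<sigma> \<in> Gbar_rot k p"
proof -
  obtain ms1 ms2 where \<sigma>: "\<sigma> permutes Bset k p" "\<forall>mv\<in>set ms1. valid_move k mv"
      "comb_pos k ms1 p = p" "\<forall>l\<in>Bset k p. comb_X k ms1 (p, l) = (p, \<sigma> l)"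
    and \<tau>: "\<tau> permutes Bset k p" "\<forall>mv\<in>set ms2. valid_move k mv"
      "comb_pos k ms2 p = p" "\<forall>l\<in>Bset k p. comb_X k ms2 (p, l) = (p, \<tau> l)"
    using assms unfolding Gbar_rot_def by blast
  have "\<forall>l\<in>Bset k p. comb_X k (ms1 @ ms2) (p, l) = (p, (\<tau> \<circ> \<sigma>) l)"
    using \<sigma>(4) \<tau>(4) permutes_in_image[OF \<sigma>(1)] by (simp add: comb_X_append)
  then show ?thesis
    unfolding Gbar_rot_def using \<sigma> \<tau>
    by (auto simp: comb_pos_append permutes_compose intro!: exI[of _ "ms1 @ ms2"])
qed

lemma Alt_subset_Gbar_rot:
  fixes p :: "'n::finite \<Rightarrow> nat"
  assumes "k \<ge> 2" "\<forall>i. p i < k"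
  shows "Alt (Bset k p) \<subseteq> Gbar_rot k p"
proof (rule Alt_subset_if_three_cycles[OF finite Gbar_rot_comp id_in_Gbar_rot])
  fix x y z assume B: "x \<in> Bset k p" "y \<in> Bset k p" "z \<in> Bset k p" and "distinct [x, y, z]"
  then have "comb_reaches k p (Transposition.transpose x y \<circ> Transposition.transpose x z) p"
    using assms by (intro comb_reaches_three_cycle) auto
  moreover have "Transposition.transpose x y \<circ> Transposition.transpose x z permutes Bset k p"
    using B by (simp add: permutes_compose permutes_swap_id)
  ultimately show "Transposition.transpose x y \<circ> Transposition.transpose x z \<in> Gbar_rot k p"
    by (simp add: Gbar_rot_if_comb_reaches)
qed

definition signed_relabelling ::
    "nat \<Rightarrow> ('n::finite \<Rightarrow> nat) \<Rightarrow> ('n \<Rightarrow> 'n) \<Rightarrow> ('n \<Rightarrow> nat) \<Rightarrow> bool" where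
  "signed_relabelling k q \<pi> q' \<longleftrightarrow> \<pi> permutes UNIV \<and>
     (\<exists>E. (\<forall>u. q' (\<pi> u) = (if u \<in> E then k - 1 - q u else q u)) \<and> (evenperm \<pi> \<longleftrightarrow> even (card E)))"

lemma signed_relabelling_id: "signed_relabelling k q id q"
  unfolding signed_relabelling_def by (auto intro: exI[of _ "{}"] permutes_id)

lemma signed_relabelling_turn:
  assumes "i \<noteq> j"
  shows "signed_relabelling k q (Transposition.transpose i j) (psi k i j q)"
proof -
  have "psi k i j q (Transposition.transpose i j u) = (if u \<in> {j} then k - 1 - q u else q u)" for u
    using assms by (cases "u = i"; cases "u = j") (auto simp: psi_def)
  then show ?thesis
    unfolding signed_relabelling_def using assms
    by (intro conjI exI[of _ "{j}"]) (auto simp: permutes_swap_id evenperm_swap)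
qed

lemma signed_relabelling_comp:
  assumes "signed_relabelling k q \<pi> q'" "signed_relabelling k q' \<tau> q''" "\<forall>u. q u < k"
  shows "signed_relabelling k q (\<tau> \<circ> \<pi>) q''"
proof -
  obtain E1 E2 where \<pi>: "\<pi> permutes UNIV" "\<forall>u. q' (\<pi> u) = (if u \<in> E1 then k - 1 - q u else q u)"
      "evenperm \<pi> \<longleftrightarrow> even (card E1)"
    and \<tau>: "\<tau> permutes UNIV" "\<forall>u. q'' (\<tau> u) = (if u \<in> E2 then k - 1 - q' u else q' u)"
      "evenperm \<tau> \<longleftrightarrow> even (card E2)"
    using assms(1,2) unfolding signed_relabelling_def by blast
  define E where "E = (E1 - \<pi> -` E2) \<union> (\<pi> -` E2 - E1)"
  have "k - 1 - (k - 1 - q u) = q u" for u using assms(3)[rule_format, of u] by arith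
  then have "q'' ((\<tau> \<circ> \<pi>) u) = (if u \<in> E then k - 1 - q u else q u)" for u
    using \<pi>(2) \<tau>(2) by (auto simp: E_def)
  moreover have "card (\<pi> -` E2) = card E2"
    using permutes_inj[OF \<pi>(1)] permutes_surj[OF \<pi>(1)] by (simp add: card_vimage_inj)
  then have "evenperm (\<tau> \<circ> \<pi>) \<longleftrightarrow> even (card E)"
    using evenperm_comp[OF permutes_imp_permutation[OF finite \<tau>(1)] permutes_imp_permutation[OF finite \<pi>(1)]]
      \<pi>(3) \<tau>(3) even_card_sym_diff[of E1 "\<pi> -` E2"] by (auto simp: E_def)
  ultimately show ?thesis
    unfolding signed_relabelling_def using permutes_compose[OF \<pi>(1) \<tau>(1)] by blast
qed

lemma comb_signed_relabelling:
  fixes q :: "'n::finite \<Rightarrow> nat"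
  assumes "\<forall>mv\<in>set ms. valid_move k mv" "\<forall>i. q i < k"
  shows "\<exists>\<pi>. (\<forall>l. comb_X k ms (q, l) = (comb_pos k ms q, \<pi> l)) \<and>
    signed_relabelling k q \<pi> (comb_pos k ms q)"
  using assms
proof (induction ms arbitrary: q)
  case Nil
  show ?case using signed_relabelling_id[of k q] by (intro exI[of _ id]) (simp add: id_def)
next
  case (Cons mv ms)
  obtain i j c where mv: "mv = (i, j, c)" by (cases mv) auto
  have ms: "\<forall>mv\<in>set ms. valid_move k mv" using Cons.prems(1) by auto
  show ?case
  proof (cases "in_layer mv q")
    case False
    then have "move_pos k mv q = q" "\<forall>l. move_X k mv (q, l) = (q, l)"
      using mv by (simp_all add: move_pos_def move_X_def)
    then show ?thesis using Cons.IH[OF ms Cons.prems(2)] by simp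
  next
    case True
    let ?t = "Transposition.transpose i j"
    have "i \<noteq> j" using Cons.prems(1) mv by (auto simp: valid_move_def)
    have step: "move_pos k mv q = psi k i j q" "\<forall>l. move_X k mv (q, l) = (psi k i j q, ?t l)"
      using True mv by (simp_all add: move_pos_def move_X_def)
    obtain \<pi> where \<pi>: "\<forall>l. comb_X k ms (psi k i j q, l) = (comb_pos k ms (psi k i j q), \<pi> l)"
      "signed_relabelling k (psi k i j q) \<pi> (comb_pos k ms (psi k i j q))"
      using Cons.IH[OF ms] psi_less[OF Cons.prems(2)] by blast
    have "signed_relabelling k q (\<pi> \<circ> ?t) (comb_pos k (mv # ms) q)"
      using signed_relabelling_comp[OF signed_relabelling_turn[OF \<open>i \<noteq> j\<close>] \<pi>(2) Cons.prems(2)] step(1)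
      by simp
    moreover have "\<forall>l. comb_X k (mv # ms) (q, l) = (comb_pos k (mv # ms) q, (\<pi> \<circ> ?t) l)"
      using step \<pi>(1) by simp
    ultimately show ?thesis by blast
  qed
qed

lemma evenperm_if_in_Gbar_rot:
  fixes p :: "'n::finite \<Rightarrow> nat"
  assumes k: "k \<ge> 2" and p: "\<forall>i. p i < k" and \<sigma>: "\<sigma> \<in> Gbar_rot k p"
    and inj: "inj_on (\<lambda>u. bar k (p u)) (- Bset k p)" and mid: "\<forall>u\<in>- Bset k p. 2 * p u + 1 \<noteq> k"
  shows "evenperm \<sigma>"
proof -
  let ?B = "Bset k p"
  obtain ms where ms: "\<sigma> permutes ?B" "\<forall>mv\<in>set ms. valid_move k mv" "comb_pos k ms p = p"
     "\<forall>l\<in>?B. comb_X k ms (p, l) = (p, \<sigma> l)"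
    using \<sigma> unfolding Gbar_rot_def by blast
  obtain \<pi> E where \<pi>: "\<forall>l. comb_X k ms (p, l) = (p, \<pi> l)"
      "\<forall>u. p (\<pi> u) = (if u \<in> E then k - 1 - p u else p u)" "evenperm \<pi> \<longleftrightarrow> even (card E)"
    using comb_signed_relabelling[OF ms(2) p] ms(3) unfolding signed_relabelling_def by auto
  have off_B: "\<pi> u = u \<and> u \<notin> E" if u: "u \<notin> ?B" for u
  proof -
    have pu: "p u \<noteq> 0" "p u \<noteq> k - 1" "p u < k" using u p by (auto simp: Bset_def)
    have "2 * p u + 1 \<noteq> k" using mid u by auto
    then have not_mid: "k - 1 - p u \<noteq> p u" using pu(3) by arith
    have "\<pi> u \<notin> ?B" "bar k (p (\<pi> u)) = bar k (p u)"
      using \<pi>(2)[rule_format, of u] pu by (auto simp: Bset_def bar_def split: if_splits)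
    then have "\<pi> u = u" using inj u by (auto dest: inj_onD)
    then show ?thesis using \<pi>(2)[rule_format, of u] not_mid by auto
  qed
  have "\<pi> = \<sigma>"
  proof
    fix l show "\<pi> l = \<sigma> l"
      using off_B ms(4) \<pi>(1) permutes_not_in[OF ms(1)] by (cases "l \<in> ?B") auto
  qed
  have E: "E = {u\<in>?B. (p (\<sigma> u) = 0) \<noteq> (p u = 0)}"
  proof (intro set_eqI iffI)
    fix u assume "u \<in> E"
    then have "u \<in> ?B" using off_B[of u] by blast
    then have "p u = 0 \<or> p u = k - 1" by (simp add: Bset_def)
    moreover have "p (\<sigma> u) = k - 1 - p u"
      using \<pi>(2)[rule_format, of u] \<open>\<pi> = \<sigma>\<close> \<open>u \<in> E\<close> by simp
    ultimately show "u \<in> {u\<in>?B. (p (\<sigma> u) = 0) \<noteq> (p u = 0)}" using \<open>u \<in> ?B\<close> k by auto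
  next
    fix u assume "u \<in> {u\<in>?B. (p (\<sigma> u) = 0) \<noteq> (p u = 0)}"
    then show "u \<in> E"
      using \<pi>(2)[rule_format, of u] \<open>\<pi> = \<sigma>\<close> by (auto split: if_splits)
  qed
  have "even (card E)"
    unfolding E by (rule permutes_even_card_crossings[OF ms(1) finite])
  then show ?thesis using \<pi>(3) \<open>\<pi> = \<sigma>\<close> by simp
qed

lemma Gbar_rot_eq_Alt:
  fixes p :: "'n::finite \<Rightarrow> nat"
  assumes "k \<ge> 2" "\<forall>i. p i < k"
    and "inj_on (\<lambda>u. bar k (p u)) (- Bset k p)" "\<forall>u\<in>- Bset k p. 2 * p u + 1 \<noteq> k"
  shows "Gbar_rot k p = Alt (Bset k p)"
proof
  show "Gbar_rot k p \<subseteq> Alt (Bset k p)"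
    using evenperm_if_in_Gbar_rot[OF assms(1,2) _ assms(3,4)] by (auto simp: Gbar_rot_def Alt_def)
qed (rule Alt_subset_Gbar_rot[OF assms(1,2)])

lemma transpose_in_Gbar_rot:
  fixes p :: "'n::finite \<Rightarrow> nat"
  assumes k: "k \<ge> 2" and p: "\<forall>i. p i < k"
    and ab: "a \<in> Bset k p" "b \<in> Bset k p" "a \<noteq> b"
    and "(\<exists>z\<in>- Bset k p. 2 * p z + 1 = k) \<or>
         (\<exists>c\<in>- Bset k p. \<exists>d\<in>- Bset k p. c \<noteq> d \<and> bar k (p c) = bar k (p d) \<and> 2 * p c + 1 \<noteq> k)"
  shows "Transposition.transpose a b \<in> Gbar_rot k p"
proof -
  consider z where "z \<notin> Bset k p" "2 * p z + 1 = k"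
    | c d where "c \<notin> Bset k p" "d \<notin> Bset k p" "c \<noteq> d" "bar k (p c) = bar k (p d)" "2 * p c + 1 \<noteq> k"
    using assms(6) by auto
  then obtain \<tau> where "comb_reaches k p \<tau> p" "\<forall>l\<in>Bset k p. \<tau> l = Transposition.transpose a b l"
  proof cases
    case (1 z)
    then have "comb_reaches k p (Transposition.transpose a b) p"
      using ab by (intro comb_reaches_swap_with_middle[OF ab(3) _ _ k p ab(1,2)]) auto
    then show ?thesis using that by blast
  next
    case (2 c d)
    then have "comb_reaches k p (Transposition.transpose c d \<circ> Transposition.transpose a b) p"
      using ab by (intro comb_reaches_two_swaps[OF ab(3) _ _ k p ab(1,2)]) auto
    moreover have "(Transposition.transpose c d \<circ> Transposition.transpose a b) l = Transposition.transpose a b l"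
      if "l \<in> Bset k p" for l
      using that ab 2 by (cases "l = a"; cases "l = b") (auto intro!: transpose_apply_other)
    ultimately show ?thesis using that by blast
  qed
  then show ?thesis
    using ab by (intro Gbar_rot_if_comb_reaches) (auto simp: permutes_swap_id)
qed

lemma Gbar_rot_eq_Sym:
  fixes p :: "'n::finite \<Rightarrow> nat"
  assumes k: "k \<ge> 2" and p: "\<forall>i. p i < k" and B: "card (Bset k p) \<ge> 2"
    and "(\<exists>z\<in>- Bset k p. 2 * p z + 1 = k) \<or>
         (\<exists>c\<in>- Bset k p. \<exists>d\<in>- Bset k p. c \<noteq> d \<and> bar k (p c) = bar k (p d) \<and> 2 * p c + 1 \<noteq> k)"
  shows "Gbar_rot k p = Sym (Bset k p)"
proof
  show "Gbar_rot k p \<subseteq> Sym (Bset k p)" by (auto simp: Gbar_rot_def Sym_def)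
  obtain a b where ab: "a \<in> Bset k p" "b \<in> Bset k p" "a \<noteq> b"
    using B card_le_Suc0_iff_eq[of "Bset k p"] by (auto simp: not_less_eq_eq[symmetric])
  with transpose_in_Gbar_rot[OF k p ab assms(4)]
  show "Sym (Bset k p) \<subseteq> Gbar_rot k p"
    by (intro Sym_subset_if_Alt_subset[OF finite Alt_subset_Gbar_rot[OF k p] Gbar_rot_comp])
qed

section \<open>The sorted interior depths\<close>

lemma card_Bset_eq_CARD_iff:
  fixes p :: "'n::finite \<Rightarrow> nat"
  shows "card (Bset k p) = CARD('n) \<longleftrightarrow> Bset k p = UNIV"
  using card_subset_eq[of UNIV "Bset k p"] by (auto simp: card_UNIV)

lemma set_jlist: "set (jlist k p) = (\<lambda>i. bar k (p i)) ` (- Bset k p)"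
  by (simp add: jlist_def)

lemma length_jlist: "length (jlist k p) = card (- Bset k p)"
  by (metis jlist_def size_image_mset size_mset size_mset_set mset_sorted_list_of_multiset)

lemma count_jlist: "count (mset (jlist k p)) v = card {i \<in> - Bset k p. bar k (p i) = v}"
  unfolding jlist_def by (simp add: count_image_mset_eq_card_vimage)

lemma inj_on_bar_if_jlist_strict:
  assumes "\<forall>r. Suc r < length (jlist k p) \<longrightarrow> jlist k p ! r < jlist k p ! Suc r"
  shows "inj_on (\<lambda>i. bar k (p i)) (- Bset k p)"
proof (rule eq_card_imp_inj_on)
  have "sorted_wrt (<) (jlist k p)"
    using assms by (subst sorted_wrt_iff_nth_Suc_transp) (auto simp: transp_def)
  then have "distinct (jlist k p)" by (simp add: strict_sorted_iff)
  then show "card ((\<lambda>i. bar k (p i)) ` (- Bset k p)) = card (- Bset k p)"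
    using distinct_card by (metis set_jlist length_jlist)
qed simp

lemma bar_le_last_jlist:
  assumes "u \<notin> Bset k p"
  shows "bar k (p u) \<le> last (jlist k p)"
proof -
  have "bar k (p u) \<in> set (jlist k p)" using assms by (simp add: set_jlist)
  then obtain r where r: "r < length (jlist k p)" "jlist k p ! r = bar k (p u)"
    by (metis in_set_conv_nth)
  have "jlist k p ! r \<le> jlist k p ! (length (jlist k p) - 1)"
    using r(1) by (intro sorted_nth_mono) (auto simp: jlist_def)
  moreover have "jlist k p \<noteq> []" using r(1) by auto
  ultimately show ?thesis using r by (simp add: last_conv_nth)
qed

lemma not_middle_if_jlist_last:
  assumes "p u < k" "u \<notin> Bset k p" "real (last (jlist k p)) < (real k - 1) / 2"
  shows "2 * p u + 1 \<noteq> k"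
proof
  assume "2 * p u + 1 = k"
  then have "real (bar k (p u)) = (real k - 1) / 2" by (auto simp: bar_def)
  with bar_le_last_jlist[OF assms(2)] assms(3) show False by linarith
qed

lemma middle_if_jlist_last:
  fixes p :: "'n::finite \<Rightarrow> nat"
  assumes "\<forall>i. p i < k" "card (Bset k p) < CARD('n)"
    and "real (last (jlist k p)) = (real k - 1) / 2"
  shows "\<exists>z\<in>- Bset k p. 2 * p z + 1 = k"
proof -
  have "Bset k p \<noteq> UNIV" using assms(2) by (auto simp: card_Bset_eq_CARD_iff)
  then have "- Bset k p \<noteq> {}" by auto
  then have "jlist k p \<noteq> []" by (simp add: set_jlist flip: set_empty)
  then have "last (jlist k p) \<in> set (jlist k p)" by simp
  then obtain z where z: "z \<notin> Bset k p" "last (jlist k p) = bar k (p z)" by (auto simp: set_jlist)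
  then have "real (2 * bar k (p z) + 1) = real k" using assms(3) by simp
  then have "2 * bar k (p z) + 1 = k" by (simp only: of_nat_eq_iff)
  then have "2 * p z + 1 = k" using assms(1)[rule_format, of z] by (auto simp: bar_def min_def split: if_splits)
  then show ?thesis using z by blast
qed

lemma equal_bars_if_jlist_repeat:
  assumes "\<forall>i. p i < k" "Suc r < length (jlist k p)" "jlist k p ! r = jlist k p ! Suc r"
    and "real (jlist k p ! r) < (real k - 1) / 2"
  shows "\<exists>c\<in>- Bset k p. \<exists>d\<in>- Bset k p. c \<noteq> d \<and> bar k (p c) = bar k (p d) \<and> 2 * p c + 1 \<noteq> k"
proof -
  let ?J = "jlist k p" and ?v = "jlist k p ! r"
  let ?S = "{i \<in> - Bset k p. bar k (p i) = ?v}"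
  have "{r, Suc r} \<subseteq> {i. i < length ?J \<and> ?J ! i = ?v}" using assms(2,3) by auto
  then have "card {r, Suc r} \<le> card {i. i < length ?J \<and> ?J ! i = ?v}"
    by (intro card_mono) auto
  then have "2 \<le> count (mset ?J) ?v"
    by (simp add: count_mset count_list_eq_length_filter length_filter_conv_card eq_commute)
  then have "2 \<le> card ?S" by (simp add: count_jlist)
  then obtain c d where cd: "c \<in> ?S" "d \<in> ?S" "c \<noteq> d"
    using card_le_Suc0_iff_eq[of ?S] by force
  moreover have "2 * p c + 1 \<noteq> k" using cd(1) assms(4) by (auto simp: bar_def)
  ultimately show ?thesis by (intro bexI[of _ c] bexI[of _ d]) auto
qed

lemma Gbar_rot_eq_Alt_if_jlist:
  fixes p :: "'n::finite \<Rightarrow> nat"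
  assumes k: "k \<ge> 2" and p: "\<forall>i. p i < k"
    and "card (Bset k p) = CARD('n) \<or>
        (card (Bset k p) < CARD('n) \<and>
         (\<forall>r. Suc r < length (jlist k p) \<longrightarrow> jlist k p ! r < jlist k p ! Suc r) \<and>
         real (last (jlist k p)) < (real k - 1) / 2)"
  shows "Gbar_rot k p = Alt (Bset k p)"
proof (cases "Bset k p = UNIV")
  case True
  then show ?thesis by (intro Gbar_rot_eq_Alt[OF k p]) simp_all
next
  case False
  with assms(3) have strict: "\<forall>r. Suc r < length (jlist k p) \<longrightarrow> jlist k p ! r < jlist k p ! Suc r"
    and last: "real (last (jlist k p)) < (real k - 1) / 2" by (simp_all add: card_Bset_eq_CARD_iff)
  have "\<forall>u\<in>- Bset k p. 2 * p u + 1 \<noteq> k"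
    using not_middle_if_jlist_last[OF _ _ last] p by blast
  with inj_on_bar_if_jlist_strict[OF strict] show ?thesis by (rule Gbar_rot_eq_Alt[OF k p])
qed

lemma Gbar_rot_eq_Sym_if_jlist:
  fixes p :: "'n::finite \<Rightarrow> nat"
  assumes k: "k \<ge> 2" and p: "\<forall>i. p i < k" and B: "card (Bset k p) \<ge> 2"
    and "card (Bset k p) < CARD('n) \<and>
        (real (last (jlist k p)) = (real k - 1) / 2 \<or>
         (\<exists>r. Suc r < length (jlist k p) \<and> jlist k p ! r = jlist k p ! Suc r \<and>
              real (jlist k p ! r) < (real k - 1) / 2))"
  shows "Gbar_rot k p = Sym (Bset k p)"
proof (rule Gbar_rot_eq_Sym[OF k p B])
  from assms(4) consider "card (Bset k p) < CARD('n)" "real (last (jlist k p)) = (real k - 1) / 2"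
    | r where "Suc r < length (jlist k p)" "jlist k p ! r = jlist k p ! Suc r"
        "real (jlist k p ! r) < (real k - 1) / 2"
    by (elim conjE disjE exE) blast+
  then show "(\<exists>z\<in>- Bset k p. 2 * p z + 1 = k) \<or>
      (\<exists>c\<in>- Bset k p. \<exists>d\<in>- Bset k p. c \<noteq> d \<and> bar k (p c) = bar k (p d) \<and> 2 * p c + 1 \<noteq> k)"
  proof cases
    case 1
    then show ?thesis using middle_if_jlist_last[OF p] by (intro disjI1)
  next
    case 2
    then show ?thesis using equal_bars_if_jlist_repeat[OF p] by (intro disjI2)
  qed
qed

section \<open>Signed permutations of coordinates\<close>

lemma all_permutes_iff:
  assumes "\<sigma> permutes UNIV"
  shows "(\<forall>i. P i) \<longleftrightarrow> (\<forall>j. P (\<sigma> j))"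
  by (metis assms permutes_inverses(1))

definition signed_perm :: "('n::finite \<Rightarrow> 'n) \<Rightarrow> ('n \<Rightarrow> real) \<Rightarrow> real^'n \<Rightarrow> real^'n" where
  "signed_perm \<sigma> d x = (\<chi> i. d (inv \<sigma> i) * x $ inv \<sigma> i)"

lemma signed_perm_nth:
  assumes "\<sigma> permutes UNIV"
  shows "signed_perm \<sigma> d x $ \<sigma> j = d j * x $ j"
  using permutes_inverses(2)[OF assms] by (simp add: signed_perm_def)

lemma linear_signed_perm: "linear (signed_perm \<sigma> d)"
  by (auto simp: linear_iff signed_perm_def vec_eq_iff algebra_simps)

lemma signed_perm_axis:
  assumes "\<sigma> permutes UNIV"
  shows "signed_perm \<sigma> d (axis j t) = axis (\<sigma> j) (d j * t)"
  using permutes_inverses[OF assms] by (auto simp: signed_perm_def axis_def vec_eq_iff)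

lemma norm_signed_perm:
  assumes "\<sigma> permutes UNIV" "\<And>j. \<bar>d j\<bar> = 1"
  shows "norm (signed_perm \<sigma> d x) = norm x"
proof -
  have "(\<Sum>i\<in>UNIV. (norm (signed_perm \<sigma> d x $ i))\<^sup>2) = (\<Sum>i\<in>UNIV. (norm (x $ inv \<sigma> i))\<^sup>2)"
    using assms(2) by (simp add: signed_perm_def abs_mult)
  also have "\<dots> = (\<Sum>i\<in>UNIV. (norm (x $ i))\<^sup>2)"
    using sum.permute[OF permutes_inv[OF assms(1)], of "\<lambda>i. (norm (x $ i))\<^sup>2"] by (simp add: comp_def)
  finally show ?thesis by (simp add: norm_vec_def L2_set_def)
qed

lemma det_matrix_signed_axes:
  fixes \<sigma> :: "'n::finite \<Rightarrow> 'n" and L :: "real^'n \<Rightarrow> real^'n"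
  assumes "\<sigma> permutes UNIV" "\<And>j. L (axis j 1) = axis (\<sigma> j) (d j)"
  shows "det (matrix L) = of_int (sign \<sigma>) * prod d UNIV"
proof -
  define D :: "real^'n^'n" where "D = (\<chi> i j. if i = j then d (inv \<sigma> j) else 0)"
  have "matrix L = (\<chi> i j. D $ i $ \<sigma> j)"
    using assms permutes_inverses[OF assms(1)] by (auto simp: matrix_def D_def axis_def vec_eq_iff)
  then have "det (matrix L) = of_int (sign \<sigma>) * det D"
    by (simp add: det_permute_columns[OF assms(1)])
  moreover have "det D = prod (d \<circ> inv \<sigma>) UNIV" by (subst det_diagonal) (auto simp: D_def)
  moreover have "prod (d \<circ> inv \<sigma>) UNIV = prod d UNIV"
    by (rule prod.permute[OF permutes_inv[OF assms(1)], symmetric])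
  ultimately show ?thesis by simp
qed

lemma det_signed_perm:
  assumes "\<sigma> permutes UNIV"
  shows "det (matrix (signed_perm \<sigma> d)) = of_int (sign \<sigma>) * prod d UNIV"
  using assms by (intro det_matrix_signed_axes) (simp_all add: signed_perm_axis)

lemma norm_axis: "norm (axis m (a::real)) = \<bar>a\<bar>"
proof -
  have "axis m a = a *\<^sub>R axis m 1" by (simp add: axis_def vec_eq_iff)
  then show ?thesis by simp
qed

definition signed_perm_at :: "real^'n \<Rightarrow> ('n::finite \<Rightarrow> 'n) \<Rightarrow> ('n \<Rightarrow> real) \<Rightarrow> real^'n \<Rightarrow> real^'n"
  where "signed_perm_at c \<sigma> d x = c + signed_perm \<sigma> d (x - c)"

lemma signed_perm_at_nth:
  assumes "\<sigma> permutes UNIV"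
  shows "(signed_perm_at c \<sigma> d x - c) $ \<sigma> j = d j * (x - c) $ j"
  by (simp add: signed_perm_at_def signed_perm_nth[OF assms])

lemma orient_pres_isometry_signed_perm_at:
  assumes "\<sigma> permutes UNIV" "\<And>j. \<bar>d j\<bar> = 1" "of_int (sign \<sigma>) * prod d UNIV = 1"
  shows "orient_pres_isometry (signed_perm_at c \<sigma> d)"
proof -
  let ?A = "signed_perm \<sigma> d"
  have "?A (x - c) - ?A (y - c) = ?A (x - y)" for x y
    by (simp add: linear_diff[OF linear_signed_perm, symmetric])
  then have diff: "signed_perm_at c \<sigma> d x - signed_perm_at c \<sigma> d y = ?A (x - y)" for x y
    by (simp add: signed_perm_at_def)
  then have "dist (signed_perm_at c \<sigma> d x) (signed_perm_at c \<sigma> d y) = dist x y" for x y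
    by (simp add: dist_norm norm_signed_perm[OF assms(1,2)])
  moreover have "(\<lambda>x. signed_perm_at c \<sigma> d x - signed_perm_at c \<sigma> d 0) = ?A"
    using diff by auto
  ultimately show ?thesis
    using assms(3) by (simp add: orient_pres_isometry_def det_signed_perm[OF assms(1)])
qed

lemma surj_signed_perm_at:
  fixes \<sigma> :: "'n::finite \<Rightarrow> 'n"
  assumes "\<sigma> permutes UNIV" "\<And>j. \<bar>d j\<bar> = 1"
  shows "surj (signed_perm_at c \<sigma> d)"
proof (rule surjI)
  fix y :: "real^'n"
  let ?x = "c + (\<chi> j. d j * (y - c) $ \<sigma> j)"
  have "d j * d j = 1" for j using abs_mult_self_eq[of "d j"] assms(2)[of j] by simp
  then have "(signed_perm_at c \<sigma> d ?x - c) $ \<sigma> j = (y - c) $ \<sigma> j" for j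
    unfolding signed_perm_at_nth[OF assms(1)] by (simp add: mult.assoc[symmetric])
  then have "signed_perm_at c \<sigma> d ?x - c = y - c"
    unfolding vec_eq_iff by (subst all_permutes_iff[OF assms(1)]) simp
  then show "signed_perm_at c \<sigma> d ?x = y" by simp
qed

section \<open>The independent rotation group\<close>

definition cubie_center :: "('n::finite \<Rightarrow> nat) \<Rightarrow> real^'n" where
  "cubie_center p = (\<chi> i. real (p i) + 1 / 2)"

definition outward :: "('n \<Rightarrow> nat) \<Rightarrow> 'n \<Rightarrow> real" where
  "outward p i = (if p i = 0 then -1 else 1)"

lemma outward_times_outward [simp]: "outward p i * outward p i = 1"
  by (simp add: outward_def)

lemma abs_outward [simp]: "\<bar>outward p i\<bar> = 1"
  by (simp add: outward_def)

lemma prod_outward_permutes: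
  assumes "\<sigma> permutes UNIV"
  shows "prod (\<lambda>j. outward p j * outward p (\<sigma> j)) UNIV = 1"
proof -
  have "prod (\<lambda>j. outward p j * outward p (\<sigma> j)) UNIV =
      prod (outward p) UNIV * prod (\<lambda>j. outward p (\<sigma> j)) UNIV"
    by (rule prod.distrib)
  also have "\<dots> = prod (outward p) UNIV * prod (outward p) UNIV"
    using prod.permute[OF assms, of "outward p"] by (simp add: comp_def)
  also have "\<dots> = prod (\<lambda>j. outward p j * outward p j) UNIV"
    by (rule prod.distrib[symmetric])
  finally show ?thesis by simp
qed

lemma mem_cubie_iff: "x \<in> cubie p \<longleftrightarrow> (\<forall>i. \<bar>(x - cubie_center p) $ i\<bar> \<le> 1 / 2)"
proof -
  have "real (p i) \<le> x $ i \<and> x $ i \<le> real (p i) + 1 \<longleftrightarrow> \<bar>(x - cubie_center p) $ i\<bar> \<le> 1 / 2" for i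
    unfolding cubie_center_def by (simp only: vector_minus_component vec_lambda_beta) arith
  then show ?thesis by (simp add: cubie_def)
qed

lemma mem_orient_face_iff:
  assumes "k \<ge> 1"
  shows "x \<in> orient_face k p l \<longleftrightarrow>
    x \<in> cubie p \<and> (\<forall>s\<in>Bset k p - {l}. (x - cubie_center p) $ s = outward p s / 2)"
proof -
  have "x $ s = (if p s = 0 then 0 else real k) \<longleftrightarrow> (x - cubie_center p) $ s = outward p s / 2"
    if "s \<in> Bset k p" for s
    using that assms by (auto simp: Bset_def cubie_center_def outward_def of_nat_diff)
  then show ?thesis unfolding orient_face_def by auto
qed

lemma G_rot_if_signed_perm:
  fixes p :: "'n::finite \<Rightarrow> nat"
  assumes k: "k \<ge> 1" and \<sigma>: "\<sigma> permutes Bset k p" and d: "\<And>j. \<bar>d j\<bar> = 1"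
    and dB: "\<And>j. j \<in> Bset k p \<Longrightarrow> d j = outward p j * outward p (\<sigma> j)"
    and det: "of_int (sign \<sigma>) * prod d UNIV = 1"
  shows "\<sigma> \<in> G_rot k p"
proof -
  let ?B = "Bset k p" and ?c = "cubie_center p"
  let ?f = "signed_perm_at ?c \<sigma> d"
  have \<sigma>U: "\<sigma> permutes UNIV" using \<sigma> by (rule permutes_subset) simp
  note f_nth = signed_perm_at_nth[OF \<sigma>U]
  have cubie: "?f x \<in> cubie p \<longleftrightarrow> x \<in> cubie p" for x
    unfolding mem_cubie_iff all_permutes_iff[OF \<sigma>U, of "\<lambda>i. \<bar>(?f x - ?c) $ i\<bar> \<le> 1 / 2"] f_nth
    by (simp add: abs_mult d)
  have face: "?f x \<in> orient_face k p (\<sigma> l) \<longleftrightarrow> x \<in> orient_face k p l" if "l \<in> ?B" for x l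
  proof -
    have img: "?B - {\<sigma> l} = \<sigma> ` (?B - {l})"
      by (simp add: image_set_diff[OF permutes_inj[OF \<sigma>]] permutes_image[OF \<sigma>])
    have "(\<forall>s\<in>?B - {\<sigma> l}. (?f x - ?c) $ s = outward p s / 2) \<longleftrightarrow>
          (\<forall>j\<in>?B - {l}. (?f x - ?c) $ \<sigma> j = outward p (\<sigma> j) / 2)"
      unfolding img by simp
    also have "\<dots> \<longleftrightarrow> (\<forall>j\<in>?B - {l}. (x - ?c) $ j = outward p j / 2)"
    proof (intro ball_cong refl)
      fix j assume "j \<in> ?B - {l}"
      then have "d j = outward p j * outward p (\<sigma> j)" by (simp add: dB)
      then show "(?f x - ?c) $ \<sigma> j = outward p (\<sigma> j) / 2 \<longleftrightarrow> (x - ?c) $ j = outward p j / 2"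
        unfolding f_nth by (auto simp: outward_def)
    qed
    finally show ?thesis unfolding mem_orient_face_iff[OF k] cubie by blast
  qed
  have surj: "surj ?f" by (rule surj_signed_perm_at[OF \<sigma>U d])
  have cubie_image: "?f ` cubie p = cubie p"
    using surj_image_vimage_eq[OF surj, of "cubie p"] cubie by (simp add: vimage_def)
  have face_image: "?f ` orient_face k p l = orient_face k p (\<sigma> l)" if "l \<in> ?B" for l
    using surj_image_vimage_eq[OF surj, of "orient_face k p (\<sigma> l)"] face[OF that]
    by (simp add: vimage_def)
  then have "(\<lambda>F. ?f ` F) ` orient_faces k p = orient_face k p ` \<sigma> ` ?B"
    by (simp add: orient_faces_def image_image)
  then have "(\<lambda>F. ?f ` F) ` orient_faces k p = orient_faces k p"
    by (simp add: permutes_image[OF \<sigma>] orient_faces_def)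
  with \<sigma> cubie_image face_image orient_pres_isometry_signed_perm_at[OF \<sigma>U d det]
  show ?thesis unfolding G_rot_def by blast
qed

(* For odd \<sigma> the sign of the determinant is corrected by reflecting an interior coordinate u. *)
lemma G_rot_if_even_or_interior:
  fixes p :: "'n::finite \<Rightarrow> nat"
  assumes "k \<ge> 1" "\<sigma> permutes Bset k p" "evenperm \<sigma> \<or> Bset k p \<noteq> UNIV"
  shows "\<sigma> \<in> G_rot k p"
proof -
  let ?B = "Bset k p" and ?s = "of_int (sign \<sigma>) :: real"
  obtain u where u: "?B \<noteq> UNIV \<Longrightarrow> u \<notin> ?B" by blast
  define d where "d j = outward p j * outward p (\<sigma> j) * (if j = u \<and> u \<notin> ?B then ?s else 1)" for j
  have "\<bar>?s\<bar> = 1" by (simp add: sign_def)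
  then have "\<bar>d j\<bar> = 1" for j by (simp add: d_def abs_mult)
  moreover have "d j = outward p j * outward p (\<sigma> j)" if "j \<in> ?B" for j
    using that by (auto simp: d_def)
  moreover have "?s * prod d UNIV = 1"
  proof -
    have sq: "prod (\<lambda>j. outward p j * outward p (\<sigma> j)) UNIV = 1"
      using prod_outward_permutes permutes_subset[OF assms(2) subset_UNIV] by blast
    have last: "prod (\<lambda>j. if j = u \<and> u \<notin> ?B then ?s else 1) UNIV = (if u \<notin> ?B then ?s else 1)"
      by (cases "u \<in> ?B") simp_all
    have "prod d UNIV = prod (\<lambda>j. outward p j * outward p (\<sigma> j)) UNIV *
        prod (\<lambda>j. if j = u \<and> u \<notin> ?B then ?s else 1) UNIV"
      unfolding d_def by (rule prod.distrib)
    then have "prod d UNIV = (if u \<notin> ?B then ?s else 1)"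
      unfolding sq last by simp
    then show ?thesis
      using assms(3) u by (auto simp: sign_def)
  qed
  ultimately show ?thesis using G_rot_if_signed_perm[OF assms(1,2)] by blast
qed

definition cubie_corner :: "('n::finite \<Rightarrow> nat) \<Rightarrow> real^'n" where
  "cubie_corner p = cubie_center p + (\<chi> s. outward p s / 2)"

lemma mem_orient_face_full_iff:
  assumes "k \<ge> 1" "Bset k p = UNIV"
  shows "x \<in> orient_face k p l \<longleftrightarrow> x \<in> cubie p \<and> (\<forall>s. s \<noteq> l \<longrightarrow> x $ s = cubie_corner p $ s)"
proof -
  have "(x - cubie_center p) $ s = outward p s / 2 \<longleftrightarrow> x $ s = cubie_corner p $ s" for s
    by (auto simp: cubie_corner_def)
  then show ?thesis unfolding mem_orient_face_iff[OF assms(1)] assms(2) by auto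
qed

lemma cubie_corner_in_orient_face:
  assumes "k \<ge> 1" "Bset k p = UNIV"
  shows "cubie_corner p \<in> orient_face k p l"
  unfolding mem_orient_face_full_iff[OF assms] mem_cubie_iff cubie_corner_def by simp

lemma orient_faces_inter:
  assumes "k \<ge> 1" "Bset k p = UNIV"
    and "x \<in> orient_face k p a" "x \<in> orient_face k p b" "a \<noteq> b"
  shows "x = cubie_corner p"
  using assms(3-5) unfolding mem_orient_face_full_iff[OF assms(1,2)] vec_eq_iff by metis

lemma orient_face_dist_corner_eq_1_iff:
  assumes "k \<ge> 1" "Bset k p = UNIV"
  shows "x \<in> orient_face k p l \<and> dist x (cubie_corner p) = 1 \<longleftrightarrow>
    x = cubie_corner p - axis l (outward p l)"
proof
  assume x: "x \<in> orient_face k p l \<and> dist x (cubie_corner p) = 1"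
  then have "x - cubie_corner p = axis l (x $ l - cubie_corner p $ l)"
    unfolding mem_orient_face_full_iff[OF assms] by (auto simp: axis_def vec_eq_iff)
  with x have "\<bar>x $ l - cubie_corner p $ l\<bar> = 1" by (simp add: dist_norm norm_axis)
  moreover have "\<bar>x $ l - cubie_center p $ l\<bar> \<le> 1 / 2"
    using x unfolding mem_orient_face_full_iff[OF assms] mem_cubie_iff by simp
  ultimately have "x $ l - cubie_corner p $ l = - outward p l"
    by (auto simp: cubie_corner_def outward_def abs_if split: if_splits)
  with \<open>x - cubie_corner p = axis l _\<close> show "x = cubie_corner p - axis l (outward p l)"
    by (simp add: axis_def vec_eq_iff algebra_simps)
next
  assume x: "x = cubie_corner p - axis l (outward p l)"
  have "x \<in> cubie p"
    unfolding x mem_cubie_iff cubie_corner_def by (simp add: axis_def outward_def)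
  then show "x \<in> orient_face k p l \<and> dist x (cubie_corner p) = 1"
    unfolding mem_orient_face_full_iff[OF assms]
    by (simp add: x dist_norm norm_axis) (simp add: x axis_def)
qed

lemma face_permuting_isometry_corner:
  fixes p :: "'n::finite \<Rightarrow> nat"
  assumes k: "k \<ge> 1" and B: "Bset k p = UNIV" and n: "CARD('n) \<ge> 2"
    and \<sigma>: "\<sigma> permutes UNIV" and iso: "\<forall>x y. dist (f x) (f y) = dist x y"
    and face: "\<And>l. f ` orient_face k p l = orient_face k p (\<sigma> l)"
  shows "f (cubie_corner p) = cubie_corner p"
    and "f (cubie_corner p - axis l (outward p l)) = cubie_corner p - axis (\<sigma> l) (outward p (\<sigma> l))"
proof -
  let ?v = "cubie_corner p" and ?u = "\<lambda>l. cubie_corner p - axis l (outward p l)"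
  obtain l1 l2 :: 'n where "l1 \<noteq> l2"
    using n card_le_Suc0_iff_eq[of "UNIV :: 'n set"] by force
  then have "\<sigma> l1 \<noteq> \<sigma> l2" using permutes_inj[OF \<sigma>] by (auto dest: injD)
  moreover have "f ?v \<in> orient_face k p (\<sigma> l)" for l
    using face[of l] cubie_corner_in_orient_face[OF k B, of l] by blast
  ultimately show fv: "f ?v = ?v" by (intro orient_faces_inter[OF k B])
  have "?u l \<in> orient_face k p l" "dist (?u l) ?v = 1"
    using orient_face_dist_corner_eq_1_iff[OF k B] by blast+
  then have "f (?u l) \<in> orient_face k p (\<sigma> l) \<and> dist (f (?u l)) ?v = 1"
    using face[of l] iso fv by (metis imageI)
  then show "f (?u l) = ?u (\<sigma> l)" using orient_face_dist_corner_eq_1_iff[OF k B] by blast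
qed

(* The linear part of the symmetry permutes the edges at the fixed corner, so it is a signed
   permutation matrix whose signs multiply to 1 and its determinant is sign \<sigma>. *)
lemma evenperm_if_in_G_rot_full:
  fixes p :: "'n::finite \<Rightarrow> nat"
  assumes k: "k \<ge> 1" and B: "Bset k p = UNIV" and n: "CARD('n) \<ge> 2" and \<sigma>: "\<sigma> \<in> G_rot k p"
  shows "evenperm \<sigma>"
proof -
  obtain f where \<sigma>U: "\<sigma> permutes UNIV" and iso: "\<forall>x y. dist (f x) (f y) = dist x y"
    and det: "det (matrix (\<lambda>x. f x - f 0)) = 1"
    and face: "\<And>l. f ` orient_face k p l = orient_face k p (\<sigma> l)"
    using \<sigma> B unfolding G_rot_def orient_pres_isometry_def by auto
  note corner = face_permuting_isometry_corner[OF k B n \<sigma>U iso face]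
  define L where "L x = f x - f 0" for x
  have "linear L"
  proof (rule isometry_linear)
    have "dist (L x) (L y) = dist (f x) (f y)" for x y by (simp add: L_def dist_norm)
    then show "\<forall>x y. dist (L x) (L y) = dist x y" using iso by simp
  qed (simp add: L_def)
  have "L (axis l 1) = axis (\<sigma> l) (outward p l * outward p (\<sigma> l))" for l
  proof -
    have "L (axis l (outward p l)) = L (cubie_corner p) - L (cubie_corner p - axis l (outward p l))"
      using linear_diff[OF \<open>linear L\<close>, of "cubie_corner p" "cubie_corner p - axis l (outward p l)"]
      by simp
    also have "\<dots> = axis (\<sigma> l) (outward p (\<sigma> l))" by (simp add: L_def corner)
    finally have L_axis: "L (axis l (outward p l)) = axis (\<sigma> l) (outward p (\<sigma> l))" .
    have "axis l 1 = outward p l *\<^sub>R axis l (outward p l)"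
      by (simp add: axis_def vec_eq_iff)
    then have "L (axis l 1) = outward p l *\<^sub>R L (axis l (outward p l))"
      by (simp add: linear_scale[OF \<open>linear L\<close>])
    also have "\<dots> = axis (\<sigma> l) (outward p l * outward p (\<sigma> l))"
      unfolding L_axis by (simp add: axis_def vec_eq_iff)
    finally show ?thesis .
  qed
  then have "det (matrix L) = of_int (sign \<sigma>) * prod (\<lambda>l. outward p l * outward p (\<sigma> l)) UNIV"
    by (rule det_matrix_signed_axes[OF \<sigma>U])
  also have "prod (\<lambda>l. outward p l * outward p (\<sigma> l)) UNIV = 1"
    by (rule prod_outward_permutes[OF \<sigma>U])
  finally have "of_int (sign \<sigma>) = (1::real)" using det by (simp add: L_def[abs_def])
  then show ?thesis by (simp add: sign_def split: if_splits)
qed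

lemma permutes_if_in_G_rot: "\<sigma> \<in> G_rot k p \<Longrightarrow> \<sigma> permutes Bset k p"
  by (simp add: G_rot_def)

lemma G_rot_eq:
  fixes p :: "'n::finite \<Rightarrow> nat"
  assumes "k \<ge> 1" "CARD('n) \<ge> 2"
  shows "G_rot k p = (if card (Bset k p) = CARD('n) then Alt (Bset k p) else Sym (Bset k p))"
proof (cases "Bset k p = UNIV")
  case True
  have "G_rot k p = Alt (Bset k p)"
  proof (intro set_eqI iffI)
    fix \<sigma> assume "\<sigma> \<in> G_rot k p"
    then show "\<sigma> \<in> Alt (Bset k p)"
      using evenperm_if_in_G_rot_full[OF assms(1) True assms(2)] permutes_if_in_G_rot
      by (simp add: Alt_def)
  next
    fix \<sigma> assume "\<sigma> \<in> Alt (Bset k p)"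
    then show "\<sigma> \<in> G_rot k p" by (simp add: Alt_def G_rot_if_even_or_interior[OF assms(1)])
  qed
  then show ?thesis using True by (simp add: card_Bset_eq_CARD_iff)
next
  case False
  have "G_rot k p = Sym (Bset k p)"
  proof (intro set_eqI iffI)
    fix \<sigma> assume "\<sigma> \<in> G_rot k p"
    then show "\<sigma> \<in> Sym (Bset k p)" by (simp add: Sym_def permutes_if_in_G_rot)
  next
    fix \<sigma> assume "\<sigma> \<in> Sym (Bset k p)"
    then show "\<sigma> \<in> G_rot k p" using False by (simp add: Sym_def G_rot_if_even_or_interior[OF assms(1)])
  qed
  then show ?thesis using False by (simp add: card_Bset_eq_CARD_iff)
qed

theorem mainTheorem2:
  fixes k :: nat and p :: "'n::finite \<Rightarrow> nat"
  assumes "CARD('n) \<ge> 3" and "k \<ge> 2" and "\<forall>i. p i < k"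
    and "card (Bset k p) \<ge> 2"
  shows "(G_rot k p = (if card (Bset k p) = CARD('n) then Alt (Bset k p) else Sym (Bset k p)))
    \<and> ((card (Bset k p) = CARD('n) \<or>
         (card (Bset k p) < CARD('n) \<and>
          (\<forall>r. Suc r < length (jlist k p) \<longrightarrow> jlist k p ! r < jlist k p ! Suc r) \<and>
          real (last (jlist k p)) < (real k - 1) / 2))
        \<longrightarrow> Gbar_rot k p = Alt (Bset k p))
    \<and> ((card (Bset k p) < CARD('n) \<and>
         (real (last (jlist k p)) = (real k - 1) / 2 \<or>
          (\<exists>r. Suc r < length (jlist k p) \<and> jlist k p ! r = jlist k p ! Suc r \<and>
               real (jlist k p ! r) < (real k - 1) / 2)))
        \<longrightarrow> Gbar_rot k p = Sym (Bset k p))"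
proof -
  have "G_rot k p = (if card (Bset k p) = CARD('n) then Alt (Bset k p) else Sym (Bset k p))"
    using assms(1,2) by (intro G_rot_eq) auto
  with Gbar_rot_eq_Alt_if_jlist[OF assms(2,3)] Gbar_rot_eq_Sym_if_jlist[OF assms(2,3,4)]
  show ?thesis by (intro conjI impI) simp_all
qed

end
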